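(* Let $\Omega\subset\mathbb{R}^2$ be compact with non-empty interior. If $$h\ge 2\max\{|z-w|: z\in uf(\Omega),\ w\in\partial\Omega\},$$ then $\Omega$ has a unique solid angle center of height $h$.
   Context: $A_\Omega^{(h)}(x)=\int_\Omega \frac{h}{(|y-x|^2+h^2)^{3/2}}\,dy$; a solid angle center of height $h$ is a maximizer of $A_\Omega^{(h)}$ over $\mathbb{R}^2$. Minimal unfolded region: for $v\in S^1$ and $c\in\mathbb{R}$ let $I_{v,c}$ be the reflection in the line $\{z: z\cdot v=c\}$, $\Omega^+_{v,a}=\Omega\cap\{z\cdot v\ge a\}$, $\Omega^-_{v,a}=\Omega\cap\{z\cdot v\le a\}$, $u(v)=\inf\{b: I_{v,c}(\Omega^+_{v,c})\subset\Omega\ \forall c\ge b\}$, $l(v)=\sup\{b: I_{v,c}(\Omega^-_{v,c})\subset\Omega\ \forall c\le b\}$, and $uf(\Omega)=\bigcap_{v\in S^1}\{z\in\mathbb{R}^2: l(v)\le z\cdot v\le u(v)\}$. *)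

theory Defs
  imports "HOL-Analysis.Analysis"
begin

definition solid_angle :: "(real^2) set \<Rightarrow> real \<Rightarrow> real^2 \<Rightarrow> real" where
  "solid_angle \<Omega> h x = integral \<Omega> (\<lambda>y. h / (norm (y - x) ^ 2 + h ^ 2) powr (3/2))"

definition solid_angle_center :: "(real^2) set \<Rightarrow> real \<Rightarrow> real^2 \<Rightarrow> bool" where
  "solid_angle_center \<Omega> h x \<longleftrightarrow> (\<forall>z. solid_angle \<Omega> h z \<le> solid_angle \<Omega> h x)"

definition refl_line :: "real^2 \<Rightarrow> real \<Rightarrow> real^2 \<Rightarrow> real^2" where
  "refl_line v c z = z - (2 * (z \<bullet> v - c)) *\<^sub>R v"

definition cap_plus :: "(real^2) set \<Rightarrow> real^2 \<Rightarrow> real \<Rightarrow> (real^2) set" where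
  "cap_plus \<Omega> v a = \<Omega> \<inter> {z. z \<bullet> v \<ge> a}"

definition cap_minus :: "(real^2) set \<Rightarrow> real^2 \<Rightarrow> real \<Rightarrow> (real^2) set" where
  "cap_minus \<Omega> v a = \<Omega> \<inter> {z. z \<bullet> v \<le> a}"

definition uf_upper :: "(real^2) set \<Rightarrow> real^2 \<Rightarrow> real" where
  "uf_upper \<Omega> v = Inf {b. \<forall>c\<ge>b. refl_line v c ` cap_plus \<Omega> v c \<subseteq> \<Omega>}"

definition uf_lower :: "(real^2) set \<Rightarrow> real^2 \<Rightarrow> real" where
  "uf_lower \<Omega> v = Sup {b. \<forall>c\<le>b. refl_line v c ` cap_minus \<Omega> v c \<subseteq> \<Omega>}"

definition unfolded_region :: "(real^2) set \<Rightarrow> (real^2) set" where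
  "unfolded_region \<Omega> =
     (\<Inter>v\<in>sphere 0 1. {z. uf_lower \<Omega> v \<le> z \<bullet> v \<and> z \<bullet> v \<le> uf_upper \<Omega> v})"

end

(*
  A maximiser of the solid angle A exists since A is continuous and decays at infinity. Every
  maximiser x lies in uf(\<Omega>): if x \<bullet> v > u(v), pick levels u(v) < c1 < c2 < x \<bullet> v. Reflecting
  in the line at c2 maps the cap beyond it into \<Omega>, and some interior point below that line has
  its mirror image outside \<Omega> (otherwise the reflections at c2 and c1 compose to a translation
  keeping the bounded interior invariant). Symmetrising A(I x) - A(x) under the reflection I
  gives a nonnegative integrand, positive near that point, so A(I x) > A(x).

  Uniqueness: uf(\<Omega>) is convex and, since the farthest point of \<Omega> from any point lies on the
  frontier, the hypothesis on h puts every point of uf(\<Omega>) within h/2 of all of \<Omega>. On the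
  ball of radius h/2 the kernel h (|p|^2 + h^2)^(-3/2) is concave along segments, strictly in
  the interior, so A is strictly midpoint concave on uf(\<Omega>) and two maximisers are impossible.
*)
theory Submission
  imports Defs
begin

definition solid_angle_kernel :: "real \<Rightarrow> 'a::real_normed_vector \<Rightarrow> real" where
  "solid_angle_kernel h p = h / (norm p ^ 2 + h ^ 2) powr (3/2)"

lemma solid_angle_eq_integral_kernel:
  "solid_angle \<Omega> h x = integral \<Omega> (\<lambda>y. solid_angle_kernel h (y - x))"
  unfolding solid_angle_def solid_angle_kernel_def ..

lemma solid_angle_kernel_pos: "h > 0 \<Longrightarrow> solid_angle_kernel h p > 0"
  unfolding solid_angle_kernel_def by (simp add: add_nonneg_pos)

lemma solid_angle_kernel_le_inverse:
  assumes "h > 0"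
  shows "solid_angle_kernel h p \<le> 1 / (norm p ^ 2 + h ^ 2)"
proof -
  define W where "W = norm p ^ 2 + h ^ 2"
  have W: "W > 0" using assms by (simp add: W_def add_nonneg_pos)
  have "h \<le> sqrt W"
    using assms by (intro real_le_rsqrt) (simp add: W_def)
  then have "W * h \<le> W * sqrt W"
    using W by simp
  also have "W * sqrt W = W powr (1 + 1/2)"
    using W by (simp only: powr_add powr_half_sqrt) simp
  finally show ?thesis
    using W assms unfolding solid_angle_kernel_def W_def[symmetric]
    by (simp add: divide_simps mult.commute)
qed

lemma solid_angle_kernel_le:
  assumes "h > 0"
  shows "solid_angle_kernel h p \<le> 1 / h^2"
    and "0 < R \<Longrightarrow> R \<le> norm p \<Longrightarrow> solid_angle_kernel h p \<le> 1 / R^2"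
proof -
  note le = solid_angle_kernel_le_inverse[OF assms, of p]
  show "solid_angle_kernel h p \<le> 1 / h^2"
    using assms by (intro order.trans[OF le] divide_left_mono) (auto simp: add_nonneg_pos)
  show "solid_angle_kernel h p \<le> 1 / R^2" if "0 < R" "R \<le> norm p"
    using that assms
    by (intro order.trans[OF le] divide_left_mono add_increasing2 power_mono) (auto simp: add_nonneg_pos)
qed

lemma solid_angle_kernel_antimono:
  assumes "h > 0" "norm p \<le> norm q"
  shows "solid_angle_kernel h q \<le> solid_angle_kernel h p"
  unfolding solid_angle_kernel_def using assms
  by (intro divide_left_mono powr_mono2 add_right_mono power_mono) (auto simp: add_nonneg_pos)

lemma solid_angle_kernel_strict_antimono:
  assumes "h > 0" "norm p < norm q"
  shows "solid_angle_kernel h q < solid_angle_kernel h p"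
  unfolding solid_angle_kernel_def using assms
  by (intro divide_strict_left_mono powr_less_mono2 add_strict_right_mono power_strict_mono)
     (auto simp: add_nonneg_pos)

lemma continuous_on_solid_angle_kernel [continuous_intros]:
  "h > 0 \<Longrightarrow> continuous_on S f \<Longrightarrow> continuous_on S (\<lambda>x. solid_angle_kernel h (f x))"
  unfolding solid_angle_kernel_def by (intro continuous_intros) (auto simp: add_pos_nonneg)

lemma absolutely_integrable_continuous_on_compact:
  fixes f :: "'a::euclidean_space \<Rightarrow> 'b::{banach, second_countable_topology}"
  assumes "compact S" "continuous_on S f"
  shows "f absolutely_integrable_on S"
  using borel_integrable_compact[OF assms] unfolding set_integrable_def
  by (metis borel_measurable_integrable integrable_completion)

lemma absolutely_integrable_solid_angle_kernel:
  fixes S :: "'a::euclidean_space set"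
  assumes "compact S" "h > 0"
  shows "(\<lambda>y. solid_angle_kernel h (y - x)) absolutely_integrable_on S"
  using assms by (intro absolutely_integrable_continuous_on_compact continuous_intros)

lemma integral_pos_if_pos_on_open:
  fixes f :: "'a::euclidean_space \<Rightarrow> real"
  assumes f: "f integrable_on S" and nonneg: "\<And>y. y \<in> S \<Longrightarrow> 0 \<le> f y"
    and U: "open U" "U \<subseteq> S" "U \<noteq> {}"
    and cont: "continuous_on U f" and pos: "\<And>y. y \<in> U \<Longrightarrow> 0 < f y"
  shows "0 < integral S f"
proof -
  from U(3) obtain p where p: "p \<in> U" by blast
  obtain a b where ab: "cbox a b \<subseteq> U" "p \<in> box a b" "\<forall>i\<in>Basis. a \<bullet> i < b \<bullet> i"
    using open_contains_cbox[OF U(1) p] .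
  have ne: "cbox a b \<noteq> {}"
    using ab(2) box_subset_cbox by blast
  have cont_ab: "continuous_on (cbox a b) f"
    using cont ab(1) continuous_on_subset by blast
  obtain m where m: "m \<in> cbox a b" "\<And>y. y \<in> cbox a b \<Longrightarrow> f m \<le> f y"
    using continuous_attains_inf[OF compact_cbox ne cont_ab] by blast
  have "Henstock_Kurzweil_Integration.content (cbox a b) > 0"
    using ab(3) unfolding content_pos_lt_eq .
  moreover have "f m > 0"
    using pos m(1) ab(1) by blast
  ultimately have "0 < Henstock_Kurzweil_Integration.content (cbox a b) * f m"
    by simp
  also have "\<dots> = integral (cbox a b) (\<lambda>_. f m)"
    by simp
  also have "\<dots> \<le> integral (cbox a b) f"
    by (rule integral_le) (use m integrable_continuous[OF cont_ab] in auto)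
  also have "\<dots> \<le> integral S f"
    by (rule integral_subset_le) (use ab(1) U(2) f nonneg integrable_continuous[OF cont_ab] in auto)
  finally show ?thesis .
qed

lemma midpoint_second_difference:
  fixes g g' g'' :: "real \<Rightarrow> real"
  assumes g: "\<And>t. (g has_real_derivative g' t) (at t)"
    and g': "\<And>t. (g' has_real_derivative g'' t) (at t)"
  obtains s d where "0 < s" "s < 1" "d > 0" "g 0 + g 1 - 2 * g (1/2) = d * g'' s"
proof -
  obtain z1 where z1: "0 < z1" "z1 < 1/2" "g (1/2) - g 0 = (1/2) * g' z1"
    using MVT2[of 0 "1/2" g g'] g by auto
  obtain z2 where z2: "1/2 < z2" "z2 < 1" "g 1 - g (1/2) = (1/2) * g' z2"
    using MVT2[of "1/2" 1 g g'] g by auto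
  obtain s where s: "z1 < s" "s < z2" "g' z2 - g' z1 = (z2 - z1) * g'' s"
    using MVT2[of z1 z2 g' g''] g' z1 z2 by auto
  show ?thesis
    by (rule that[of s "(z2 - z1) / 2"]) (use z1 z2 s in auto)
qed

lemma solid_angle_kernel_profile_has_derivative:
  fixes a b c h :: real
  defines "W \<equiv> \<lambda>t. a - 2*b*t + c*t^2 + h^2"
  assumes W: "\<And>t. 0 < W t"
  shows "((\<lambda>t. h * W t powr (-3/2)) has_real_derivative 3*h*(b - c*t) * W t powr (-5/2)) (at t)"
    and "((\<lambda>t. 3*h*(b - c*t) * W t powr (-5/2)) has_real_derivative
          3*h*(5*(b - c*t)^2 - c * W t) * W t powr (-7/2)) (at t)"
proof -
  show "((\<lambda>t. h * W t powr (-3/2)) has_real_derivative 3*h*(b - c*t) * W t powr (-5/2)) (at t)"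
    using W[of t] unfolding W_def by (auto intro!: derivative_eq_intros simp: field_simps)
  have "W t powr (-5/2) = W t powr (1 + -7/2)"
    by simp
  also have "\<dots> = W t * W t powr (-7/2)"
    using W[of t] by (simp only: powr_add powr_one_gt_zero_iff) simp
  finally have "W t powr (-5/2) = W t * W t powr (-7/2)" .
  then show "((\<lambda>t. 3*h*(b - c*t) * W t powr (-5/2)) has_real_derivative
          3*h*(5*(b - c*t)^2 - c * W t) * W t powr (-7/2)) (at t)"
    using W[of t] unfolding W_def
    by (auto intro!: derivative_eq_intros) (simp add: field_simps power2_eq_square)
qed

lemma solid_angle_kernel_midpoint_defect:
  fixes p D :: "'a::real_inner"
  assumes h: "h > 0"
  obtains t d where "0 < t" "t < 1" "d > 0"
    "d * (D \<bullet> D) * (h^2 - 4 * norm (p - t *\<^sub>R D)^2)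
       \<le> 2 * solid_angle_kernel h (p - (1/2) *\<^sub>R D) - solid_angle_kernel h p
           - solid_angle_kernel h (p - D)"
proof -
  define a b c where "a = p \<bullet> p" and "b = p \<bullet> D" and "c = D \<bullet> D"
  define W where "W t = a - 2*b*t + c*t^2 + h^2" for t
  have norm_eq: "norm (p - t *\<^sub>R D)^2 = a - 2*b*t + c*t^2" for t
    unfolding power2_norm_eq_inner a_def b_def c_def
    by (simp add: inner_commute[of D p] power2_eq_square algebra_simps)
  have W_pos: "0 < W t" for t
    unfolding W_def norm_eq[symmetric] using h by (simp add: add_nonneg_pos)
  define g where "g t = h * W t powr (-3/2)" for t
  have g_eq: "g t = solid_angle_kernel h (p - t *\<^sub>R D)" for t
    unfolding g_def solid_angle_kernel_def W_def norm_eq[symmetric]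
    by (simp add: powr_minus_divide)
  \<comment> \<open>With s = (p - t D) \<bullet> D = b - c t, the second derivative is 3 h (5 s^2 - c W) W^(-7/2),
    and Cauchy-Schwarz gives s^2 \<le> c |p - t D|^2.\<close>
  note derivs = solid_angle_kernel_profile_has_derivative[of a b c h, folded W_def, OF W_pos]
  obtain s d where s: "0 < s" "s < 1" "d > 0"
    and defect: "g 0 + g 1 - 2 * g (1/2) = d * (3*h*(5*(b - c * s)^2 - c * W s) * W s powr (-7/2))"
    using midpoint_second_difference[of g, OF derivs[folded g_def]] by blast
  have W_s: "W s = norm (p - s *\<^sub>R D)^2 + h^2"
    by (simp add: W_def norm_eq)
  have "(b - c * s)^2 \<le> norm (p - s *\<^sub>R D)^2 * c"
  proof -
    have "(b - c * s)^2 = ((p - s *\<^sub>R D) \<bullet> D)^2"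
      by (simp add: b_def c_def inner_diff_left mult.commute)
    also have "\<dots> \<le> norm (p - s *\<^sub>R D)^2 * norm D^2"
      by (metis Cauchy_Schwarz_ineq power2_norm_eq_inner)
    finally show ?thesis by (simp add: c_def power2_norm_eq_inner)
  qed
  then have sign: "c * (h^2 - 4 * norm (p - s *\<^sub>R D)^2) \<le> c * W s - 5*(b - c * s)^2"
    unfolding W_s by (simp add: algebra_simps)
  define e where "e = 3*h*d * W s powr (-7/2)"
  have e: "e > 0"
    unfolding e_def using h s W_pos[of s] by simp
  have "e * (c * (h^2 - 4 * norm (p - s *\<^sub>R D)^2)) \<le> e * (c * W s - 5*(b - c * s)^2)"
    using e sign by (intro mult_left_mono) auto
  also have "\<dots> = 2 * g (1/2) - g 0 - g 1"
    using defect unfolding e_def by (simp add: algebra_simps)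
  finally show ?thesis
    using that[of s e] s e unfolding g_eq c_def by (simp add: mult.assoc)
qed

lemma solid_angle_kernel_midpoint_concave:
  fixes p D :: "'a::real_inner"
  assumes h: "h > 0" and near: "\<And>t. 0 \<le> t \<Longrightarrow> t \<le> 1 \<Longrightarrow> norm (p - t *\<^sub>R D) \<le> h/2"
  shows "solid_angle_kernel h p + solid_angle_kernel h (p - D)
           \<le> 2 * solid_angle_kernel h (p - (1/2) *\<^sub>R D)"
proof -
  obtain t d where t: "0 < t" "t < 1" "d > 0"
    and defect: "d * (D \<bullet> D) * (h^2 - 4 * norm (p - t *\<^sub>R D)^2)
       \<le> 2 * solid_angle_kernel h (p - (1/2) *\<^sub>R D) - solid_angle_kernel h p
           - solid_angle_kernel h (p - D)"
    using solid_angle_kernel_midpoint_defect[OF h] .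
  have "norm (p - t *\<^sub>R D)^2 \<le> (h/2)^2"
    using near[of t] t by (intro power_mono) auto
  then have "0 \<le> d * (D \<bullet> D) * (h^2 - 4 * norm (p - t *\<^sub>R D)^2)"
    using t by (simp add: power_divide)
  with defect show ?thesis by linarith
qed

lemma solid_angle_kernel_midpoint_strictly_concave:
  fixes p D :: "'a::real_inner"
  assumes h: "h > 0" and "D \<noteq> 0"
    and near: "\<And>t. 0 \<le> t \<Longrightarrow> t \<le> 1 \<Longrightarrow> norm (p - t *\<^sub>R D) < h/2"
  shows "solid_angle_kernel h p + solid_angle_kernel h (p - D)
           < 2 * solid_angle_kernel h (p - (1/2) *\<^sub>R D)"
proof -
  obtain t d where t: "0 < t" "t < 1" "d > 0"
    and defect: "d * (D \<bullet> D) * (h^2 - 4 * norm (p - t *\<^sub>R D)^2)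
       \<le> 2 * solid_angle_kernel h (p - (1/2) *\<^sub>R D) - solid_angle_kernel h p
           - solid_angle_kernel h (p - D)"
    using solid_angle_kernel_midpoint_defect[OF h] .
  have "norm (p - t *\<^sub>R D)^2 < (h/2)^2"
    using near[of t] t by (intro power_strict_mono) auto
  then have "0 < d * (D \<bullet> D) * (h^2 - 4 * norm (p - t *\<^sub>R D)^2)"
    using t \<open>D \<noteq> 0\<close> by (simp add: power_divide)
  with defect show ?thesis by linarith
qed

lemma continuous_solid_angle:
  fixes \<Omega> :: "(real^2) set"
  assumes cpt: "compact \<Omega>" and h: "h > 0"
  shows "continuous_on S (solid_angle \<Omega> h)"
proof (rule continuous_on_sequentiallyI)
  fix u :: "nat \<Rightarrow> real^2" and a
  assume u: "u \<longlonglongrightarrow> a"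
  have "(\<lambda>k. integral \<Omega> (\<lambda>y. solid_angle_kernel h (y - u k)))
      \<longlonglongrightarrow> integral \<Omega> (\<lambda>y. solid_angle_kernel h (y - a))"
  proof (rule dominated_convergence(2))
    show "(\<lambda>y. solid_angle_kernel h (y - u k)) integrable_on \<Omega>" for k
      using absolutely_integrable_solid_angle_kernel[OF cpt h] set_lebesgue_integral_eq_integral(1)
      by blast
    show "(\<lambda>_. 1 / h^2) integrable_on \<Omega>"
      using lmeasurable_compact[OF cpt] by (rule integrable_on_const)
    show "norm (solid_angle_kernel h (y - u k)) \<le> 1 / h^2" for k y
      using solid_angle_kernel_pos[OF h, of "y - u k"] solid_angle_kernel_le(1)[OF h, of "y - u k"]
      by simp
    show "(\<lambda>k. solid_angle_kernel h (y - u k)) \<longlonglongrightarrow> solid_angle_kernel h (y - a)" for y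
      using continuous_on_solid_angle_kernel[OF h continuous_on_id, of "UNIV :: (real^2) set"]
      by (intro isCont_tendsto_compose[of _ "solid_angle_kernel h"] tendsto_intros u)
         (simp add: continuous_on_eq_continuous_within)
  qed
  then show "(\<lambda>n. solid_angle \<Omega> h (u n)) \<longlonglongrightarrow> solid_angle \<Omega> h a"
    unfolding solid_angle_eq_integral_kernel .
qed

lemma solid_angle_pos:
  fixes \<Omega> :: "(real^2) set"
  assumes cpt: "compact \<Omega>" and int: "interior \<Omega> \<noteq> {}" and h: "h > 0"
  shows "0 < solid_angle \<Omega> h x"
  unfolding solid_angle_eq_integral_kernel
proof (rule integral_pos_if_pos_on_open[of _ _ "interior \<Omega>"])
  show "(\<lambda>y. solid_angle_kernel h (y - x)) integrable_on \<Omega>"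
    using absolutely_integrable_solid_angle_kernel[OF cpt h] set_lebesgue_integral_eq_integral(1)
    by blast
  show "continuous_on (interior \<Omega>) (\<lambda>y. solid_angle_kernel h (y - x))"
    using h by (intro continuous_intros)
qed (use int interior_subset solid_angle_kernel_pos[OF h] in \<open>auto intro: less_imp_le\<close>)

lemma solid_angle_le_of_dist_ge:
  fixes \<Omega> :: "(real^2) set"
  assumes cpt: "compact \<Omega>" and h: "h > 0" and R: "0 < R" "\<And>y. y \<in> \<Omega> \<Longrightarrow> R \<le> norm (y - z)"
  shows "solid_angle \<Omega> h z \<le> measure lebesgue \<Omega> / R^2"
proof -
  have "solid_angle \<Omega> h z \<le> integral \<Omega> (\<lambda>_. 1 / R^2)"
    unfolding solid_angle_eq_integral_kernel
  proof (rule integral_le)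
    show "(\<lambda>y. solid_angle_kernel h (y - z)) integrable_on \<Omega>"
      using absolutely_integrable_solid_angle_kernel[OF cpt h] set_lebesgue_integral_eq_integral(1)
      by blast
    show "(\<lambda>_. 1 / R^2) integrable_on \<Omega>"
      using lmeasurable_compact[OF cpt] by (rule integrable_on_const)
  qed (use solid_angle_kernel_le(2)[OF h R(1)] R(2) in auto)
  also have "\<dots> = measure lebesgue \<Omega> / R^2"
    using lmeasure_integral[OF lmeasurable_compact[OF cpt]] by simp
  finally show ?thesis .
qed

lemma exists_maximum_if_less_outside_cball:
  fixes f :: "'a::{real_normed_vector, heine_borel} \<Rightarrow> real"
  assumes cont: "continuous_on UNIV f" and far: "\<And>z. r < norm z \<Longrightarrow> f z < f a"
  obtains x where "\<And>z. f z \<le> f x"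
proof -
  have "a \<in> cball 0 r"
    using far[of a] by force
  then obtain x where x: "\<And>z. z \<in> cball 0 r \<Longrightarrow> f z \<le> f x"
    using continuous_attains_sup[OF compact_cball _ continuous_on_subset[OF cont]] by blast
  have "f z \<le> f x" for z
    using x[of z] x[OF \<open>a \<in> cball 0 r\<close>] far[of z] by (cases "r < norm z") auto
  then show ?thesis by (rule that)
qed

lemma exists_solid_angle_center:
  fixes \<Omega> :: "(real^2) set"
  assumes cpt: "compact \<Omega>" and int: "interior \<Omega> \<noteq> {}" and h: "h > 0"
  obtains x where "solid_angle_center \<Omega> h x"
proof -
  define A where "A = solid_angle \<Omega> h 0"
  have A: "0 < A"
    unfolding A_def by (rule solid_angle_pos[OF cpt int h])
  define R where "R = max 1 (measure lebesgue \<Omega> / A + 1)"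
  have R: "1 \<le> R" "measure lebesgue \<Omega> / A < R"
    unfolding R_def by auto
  have small: "measure lebesgue \<Omega> / R^2 < A"
  proof -
    have "measure lebesgue \<Omega> / R^2 \<le> measure lebesgue \<Omega> / R"
      using R by (intro divide_left_mono) (auto simp: power2_eq_square)
    also have "\<dots> < A"
      using R A by (simp add: field_simps)
    finally show ?thesis .
  qed
  obtain B where B: "\<And>y. y \<in> \<Omega> \<Longrightarrow> norm y \<le> B"
    using compact_imp_bounded[OF cpt] bounded_iff by blast
  show ?thesis
  proof (rule exists_maximum_if_less_outside_cball[OF continuous_solid_angle[OF cpt h], of "B + R" 0])
    fix z :: "real^2" assume z: "B + R < norm z"
    have "R \<le> norm (y - z)" if "y \<in> \<Omega>" for y
      using B[OF that] z norm_triangle_ineq2[of z y] by (simp add: norm_minus_commute)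
    then have "solid_angle \<Omega> h z \<le> measure lebesgue \<Omega> / R^2"
      using R by (intro solid_angle_le_of_dist_ge[OF cpt h]) auto
    with small show "solid_angle \<Omega> h z < solid_angle \<Omega> h 0"
      unfolding A_def by linarith
  next
    fix x assume "\<And>z. solid_angle \<Omega> h z \<le> solid_angle \<Omega> h x"
    then show ?thesis
      by (intro that[of x]) (simp add: solid_angle_center_def)
  qed
qed

lemma orthogonal_transformation_reflection:
  fixes v :: "'a::real_inner"
  assumes "norm v = 1"
  shows "orthogonal_transformation (\<lambda>z. z - (2 * (z \<bullet> v)) *\<^sub>R v)"
  unfolding orthogonal_transformation_def
proof (intro conjI allI)
  show "linear (\<lambda>z. z - (2 * (z \<bullet> v)) *\<^sub>R v)"
    by (intro linearI) (auto simp: algebra_simps)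
  have "v \<bullet> v = 1" using assms by (simp add: norm_eq_1)
  then show "(a - (2 * (a \<bullet> v)) *\<^sub>R v) \<bullet> (b - (2 * (b \<bullet> v)) *\<^sub>R v) = a \<bullet> b" for a b
    by (simp add: inner_commute[of v a] inner_commute[of v b]
        algebra_simps)
qed

lemma refl_line_eq_reflection_plus:
  "refl_line v c z = (z - (2 * (z \<bullet> v)) *\<^sub>R v) + (2 * c) *\<^sub>R v"
  unfolding refl_line_def by (simp add: algebra_simps)

lemma inner_refl_line: "norm v = 1 \<Longrightarrow> refl_line v c z \<bullet> v = 2 * c - z \<bullet> v"
  unfolding refl_line_def by (simp add: norm_eq_1 algebra_simps)

lemma refl_line_refl_line:
  assumes "norm v = 1"
  shows "refl_line v c (refl_line v c' z) = z - (2 * (c' - c)) *\<^sub>R v"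
proof -
  have "refl_line v c (refl_line v c' z)
      = z - (2 * (z \<bullet> v - c')) *\<^sub>R v - (2 * (2 * c' - z \<bullet> v - c)) *\<^sub>R v"
    unfolding refl_line_def[of v c] inner_refl_line[OF assms] by (simp add: refl_line_def)
  also have "\<dots> = z - (2 * (c' - c)) *\<^sub>R v"
    unfolding diff_diff_eq scaleR_add_left[symmetric] by (rule arg_cong[where f = "\<lambda>t. z - t *\<^sub>R v"]) simp
  finally show ?thesis .
qed

lemma refl_line_involutive: "norm v = 1 \<Longrightarrow> refl_line v c (refl_line v c z) = z"
  by (simp add: refl_line_refl_line)

lemma norm_diff_refl_line:
  assumes "norm v = 1"
  shows "norm (refl_line v c z - refl_line v c w) = norm (z - w)"
proof -
  note orth = orthogonal_transformation_reflection[OF assms]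
  have "refl_line v c z - refl_line v c w = (z - w) - (2 * ((z - w) \<bullet> v)) *\<^sub>R v"
    unfolding refl_line_def by (simp add: inner_diff_left algebra_simps)
  then show ?thesis
    using orthogonal_transformation_norm[OF orth] by metis
qed

lemma norm_refl_line_diff_sq:
  assumes "norm v = 1"
  shows "norm (refl_line v c z - x)^2 = norm (z - x)^2 + 4 * (z \<bullet> v - c) * (x \<bullet> v - c)"
proof -
  have "v \<bullet> v = 1" using assms by (simp add: norm_eq_1)
  then show ?thesis
    unfolding refl_line_def power2_norm_eq_inner
    by (simp add: inner_commute[of v z] inner_commute[of v x]
        power2_eq_square algebra_simps)
qed

lemma continuous_on_refl_line: "continuous_on S (refl_line v c)"
  unfolding refl_line_def by (intro continuous_intros)

lemma integral_orthogonal_transformation_shift: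
  fixes f :: "real^'n::{finite,wellorder} \<Rightarrow> real" and L :: "real^'n::_ \<Rightarrow> real^'n::_"
  assumes L: "orthogonal_transformation L" and f: "f absolutely_integrable_on UNIV"
  shows "(\<lambda>x. f (L x + b)) absolutely_integrable_on UNIV"
    and "integral UNIV (\<lambda>x. f (L x + b)) = integral UNIV f"
proof -
  let ?F = "\<lambda>y. (vec (f y) :: real^1)"
  have "surj L" using L orthogonal_transformation_surj by blast
  then have surj: "range (\<lambda>x. L x + b) = UNIV"
    by (metis (no_types, lifting) surj_def diff_add_cancel)
  have inj: "inj (\<lambda>x. L x + b)"
    using orthogonal_transformation_inj[OF L] by (auto simp: inj_on_def)
  have der: "((\<lambda>x. L x + b) has_derivative L) (at x within UNIV)" for x
    using orthogonal_transformation_linear[OF L]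
    by (auto intro!: derivative_eq_intros linear_imp_has_derivative)
  have "(\<lambda>x. \<bar>det (matrix L)\<bar> *\<^sub>R ?F (L x + b)) absolutely_integrable_on UNIV \<and>
        integral UNIV (\<lambda>x. \<bar>det (matrix L)\<bar> *\<^sub>R ?F (L x + b)) = vec (integral UNIV f)"
    using f der inj surj
    by (intro has_absolute_integral_change_of_variables[THEN iffD2])
       (auto simp: absolutely_integrable_on_1_iff integral_on_1_eq)
  then show "(\<lambda>x. f (L x + b)) absolutely_integrable_on UNIV"
    and "integral UNIV (\<lambda>x. f (L x + b)) = integral UNIV f"
    using L by (auto simp: absolutely_integrable_on_1_iff integral_on_1_eq vec_eq_iff)
qed

lemma
  fixes f :: "real^2 \<Rightarrow> real"
  assumes "norm v = 1" and "f absolutely_integrable_on UNIV"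
  shows absolutely_integrable_refl_line: "(\<lambda>z. f (refl_line v c z)) absolutely_integrable_on UNIV"
    and integral_refl_line: "integral UNIV (\<lambda>z. f (refl_line v c z)) = integral UNIV f"
  using integral_orthogonal_transformation_shift[OF orthogonal_transformation_reflection[OF assms(1)]
      assms(2), of "(2 * c) *\<^sub>R v"]
  unfolding refl_line_eq_reflection_plus[symmetric] by auto

lemma solid_angle_kernel_refl_line_le:
  assumes "h > 0" "norm v = 1" "c \<le> z \<bullet> v" "c \<le> x \<bullet> v"
  shows "solid_angle_kernel h (refl_line v c z - x) \<le> solid_angle_kernel h (z - x)"
proof -
  have "norm (z - x)^2 \<le> norm (refl_line v c z - x)^2"
    unfolding norm_refl_line_diff_sq[OF assms(2)] using assms(3,4) by simp
  then show ?thesis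
    using assms(1) by (intro solid_angle_kernel_antimono) (auto intro: power2_le_imp_le)
qed

lemma solid_angle_kernel_less_refl_line:
  assumes "h > 0" "norm v = 1" "z \<bullet> v < c" "c < x \<bullet> v"
  shows "solid_angle_kernel h (z - x) < solid_angle_kernel h (refl_line v c z - x)"
proof -
  have "(z \<bullet> v - c) * (x \<bullet> v - c) < 0"
    using assms(3,4) by (intro mult_neg_pos) auto
  then have "norm (refl_line v c z - x)^2 < norm (z - x)^2"
    unfolding norm_refl_line_diff_sq[OF assms(2)] mult.assoc by linarith
  then show ?thesis
    using assms(1) by (intro solid_angle_kernel_strict_antimono) (auto intro: power2_less_imp_less)
qed

lemma solid_angle_eq_integral_indicator:
  assumes "compact \<Omega>" "h > 0"
  shows "solid_angle \<Omega> h a = integral UNIV (\<lambda>z. indicator \<Omega> z * solid_angle_kernel h (z - a))"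
    and "(\<lambda>z. indicator \<Omega> z * solid_angle_kernel h (z - a)) absolutely_integrable_on UNIV"
proof -
  have eq: "(\<lambda>z. indicator \<Omega> z * solid_angle_kernel h (z - a))
      = (\<lambda>z. if z \<in> \<Omega> then solid_angle_kernel h (z - a) else 0)"
    by (simp add: fun_eq_iff indicator_def)
  show "solid_angle \<Omega> h a = integral UNIV (\<lambda>z. indicator \<Omega> z * solid_angle_kernel h (z - a))"
    unfolding eq integral_restrict_UNIV solid_angle_eq_integral_kernel ..
  show "(\<lambda>z. indicator \<Omega> z * solid_angle_kernel h (z - a)) absolutely_integrable_on UNIV"
    unfolding eq absolutely_integrable_restrict_UNIV
    by (rule absolutely_integrable_solid_angle_kernel[OF assms])
qed

lemma integral_refl_line_symmetrization:
  fixes \<Omega> :: "(real^2) set" and c :: real and x :: "real^2"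
  assumes cpt: "compact \<Omega>" and h: "h > 0" and v: "norm v = 1"
  defines "\<phi> \<equiv> \<lambda>z. (indicator \<Omega> (refl_line v c z) - indicator \<Omega> z :: real)
      * (solid_angle_kernel h (z - x) - solid_angle_kernel h (refl_line v c z - x))"
  shows "\<phi> integrable_on UNIV"
    and "integral UNIV \<phi> = 2 * (solid_angle \<Omega> h (refl_line v c x) - solid_angle \<Omega> h x)"
proof -
  let ?I = "refl_line v c" and ?K = "\<lambda>z. solid_angle_kernel h (z - x)"
  let ?\<chi> = "indicator \<Omega> :: real^2 \<Rightarrow> real"
  note A = solid_angle_eq_integral_indicator[OF cpt h]
  define g where "g w = ?\<chi> w * solid_angle_kernel h (w - ?I x)" for w
  have K_refl: "solid_angle_kernel h (?I z - ?I x) = ?K z" for z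
    unfolding solid_angle_kernel_def norm_diff_refl_line[OF v] ..
  define \<Delta> where "\<Delta> z = (?\<chi> (?I z) - ?\<chi> z) * ?K z" for z
  have \<Delta>_eq: "\<Delta> = (\<lambda>z. g (?I z) - ?\<chi> z * ?K z)"
    unfolding \<Delta>_def g_def K_refl by (simp add: algebra_simps)
  have g_refl: "(\<lambda>z. g (?I z)) absolutely_integrable_on UNIV"
    unfolding g_def by (rule absolutely_integrable_refl_line[OF v A(2)])
  have \<Delta>_int: "\<Delta> absolutely_integrable_on UNIV"
    unfolding \<Delta>_eq by (rule set_integral_diff(1)[OF g_refl A(2)])
  have \<Delta>_refl: "(\<lambda>z. \<Delta> (?I z)) absolutely_integrable_on UNIV"
    by (rule absolutely_integrable_refl_line[OF v \<Delta>_int])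
  have \<phi>_eq: "\<phi> = (\<lambda>z. \<Delta> z + \<Delta> (?I z))"
    unfolding \<phi>_def \<Delta>_def refl_line_involutive[OF v] by (simp add: algebra_simps)
  show "\<phi> integrable_on UNIV"
    unfolding \<phi>_eq using \<Delta>_int \<Delta>_refl by (intro integrable_add set_lebesgue_integral_eq_integral(1))
  have "integral UNIV \<Delta> = solid_angle \<Omega> h (?I x) - solid_angle \<Omega> h x"
    unfolding \<Delta>_eq A(1)
    using integral_refl_line[OF v A(2)[of "?I x"]] g_refl A(2)[of x]
    by (simp add: g_def integral_diff set_lebesgue_integral_eq_integral(1))
  then show "integral UNIV \<phi> = 2 * (solid_angle \<Omega> h (?I x) - solid_angle \<Omega> h x)"
    unfolding \<phi>_eq using \<Delta>_int \<Delta>_refl integral_refl_line[OF v \<Delta>_int]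
    by (simp add: integral_add set_lebesgue_integral_eq_integral(1))
qed

lemma solid_angle_less_solid_angle_refl_line:
  fixes \<Omega> :: "(real^2) set"
  assumes cpt: "compact \<Omega>" and h: "h > 0" and v: "norm v = 1"
    and cap: "\<And>z. z \<in> \<Omega> \<Longrightarrow> c \<le> z \<bullet> v \<Longrightarrow> refl_line v c z \<in> \<Omega>"
    and x: "c < x \<bullet> v"
    and y: "y \<in> interior \<Omega>" "y \<bullet> v < c" "refl_line v c y \<notin> \<Omega>"
  shows "solid_angle \<Omega> h x < solid_angle \<Omega> h (refl_line v c x)"
proof -
  let ?I = "refl_line v c" and ?K = "\<lambda>z. solid_angle_kernel h (z - x)"
  let ?\<chi> = "indicator \<Omega> :: real^2 \<Rightarrow> real"
  define \<phi> where "\<phi> z = (?\<chi> (?I z) - ?\<chi> z) * (?K z - ?K (?I z))" for z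
  note symm = integral_refl_line_symmetrization[OF cpt h v, of c x, folded \<phi>_def]
  \<comment> \<open>Beyond the line the cap reflects into \<Omega> and points are closer to x than their mirror
    images; below it both comparisons reverse.\<close>
  have \<phi>_nonneg: "0 \<le> \<phi> z" for z
  proof (cases "c \<le> z \<bullet> v")
    case True
    then have "?\<chi> z \<le> ?\<chi> (?I z)"
      using cap by (simp add: indicator_def)
    moreover have "?K (?I z) \<le> ?K z"
      using solid_angle_kernel_refl_line_le[OF h v True] x by simp
    ultimately show ?thesis
      unfolding \<phi>_def by simp
  next
    case False
    then have "c \<le> ?I z \<bullet> v"
      by (simp add: inner_refl_line[OF v])
    then have "?\<chi> (?I z) \<le> ?\<chi> z"
      using cap[of "?I z"] by (simp add: indicator_def refl_line_involutive[OF v])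
    moreover have "?K z < ?K (?I z)"
      using solid_angle_kernel_less_refl_line[OF h v _ x] False by simp
    ultimately show ?thesis
      unfolding \<phi>_def by (simp add: mult_nonpos_nonpos)
  qed
  define U where "U = interior \<Omega> \<inter> {z. z \<bullet> v < c} - ?I -` \<Omega>"
  have "0 < integral UNIV \<phi>"
  proof (rule integral_pos_if_pos_on_open[OF symm(1) \<phi>_nonneg])
    have "closed (?I -` \<Omega>)"
      using compact_imp_closed[OF cpt] continuous_on_refl_line by (rule closed_vimage)
    then show "open U"
      unfolding U_def by (intro open_Diff open_Int open_interior open_halfspace_component_lt)
    show "U \<subseteq> UNIV" "U \<noteq> {}"
      using y by (auto simp: U_def)
    have "\<phi> z = ?K (?I z) - ?K z" if "z \<in> U" for z
      using that interior_subset[of \<Omega>] by (auto simp: U_def \<phi>_def)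
    moreover have "continuous_on U (\<lambda>z. ?K (?I z) - ?K z)"
      using h by (intro continuous_intros continuous_on_refl_line)
    ultimately show "continuous_on U \<phi>"
      by (metis (no_types, lifting) continuous_on_eq)
    show "0 < \<phi> z" if "z \<in> U" for z
      using solid_angle_kernel_less_refl_line[OF h v _ x] that interior_subset[of \<Omega>]
      by (auto simp: U_def \<phi>_def)
  qed
  then show ?thesis
    using symm(2) by simp
qed

lemma refl_line_mem_if_uf_upper_less:
  assumes cpt: "compact \<Omega>" and ne: "\<Omega> \<noteq> {}" and v: "norm v = 1"
    and c: "uf_upper \<Omega> v < c" and z: "z \<in> \<Omega>" "c \<le> z \<bullet> v"
  shows "refl_line v c z \<in> \<Omega>"
proof -
  define S where "S = {b. \<forall>c\<ge>b. refl_line v c ` cap_plus \<Omega> v c \<subseteq> \<Omega>}"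
  have "continuous_on \<Omega> (\<lambda>z. z \<bullet> v)"
    by (intro continuous_intros)
  then obtain zmin zmax where zmin: "zmin \<in> \<Omega>" "\<And>z. z \<in> \<Omega> \<Longrightarrow> zmin \<bullet> v \<le> z \<bullet> v"
    and zmax: "zmax \<in> \<Omega>" "\<And>z. z \<in> \<Omega> \<Longrightarrow> z \<bullet> v \<le> zmax \<bullet> v"
    using continuous_attains_inf[OF cpt ne] continuous_attains_sup[OF cpt ne] by metis
  have "zmax \<bullet> v + 1 \<in> S"
    using zmax(2) by (force simp: S_def cap_plus_def)
  then have "S \<noteq> {}" by blast
  moreover have "bdd_below S"
  proof
    fix b assume b: "b \<in> S"
    show "(zmin \<bullet> v + zmax \<bullet> v) / 2 \<le> b"
    proof (rule ccontr)
      assume "\<not> ?thesis"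
      then have "zmax \<in> cap_plus \<Omega> v b"
        using zmax zmin(2)[OF zmax(1)] by (simp add: cap_plus_def)
      then have "refl_line v b zmax \<in> \<Omega>"
        using b by (auto simp: S_def)
      then have "zmin \<bullet> v \<le> 2 * b - zmax \<bullet> v"
        using zmin(2) by (force simp: inner_refl_line[OF v])
      with \<open>\<not> ?thesis\<close> show False by simp
    qed
  qed
  ultimately obtain b where "b \<in> S" "b < c"
    using c unfolding uf_upper_def S_def[symmetric] by (meson cInf_less_iff)
  then have "refl_line v c ` cap_plus \<Omega> v c \<subseteq> \<Omega>"
    by (simp add: S_def)
  then show ?thesis
    using z by (auto simp: cap_plus_def)
qed

lemma refl_line_in_interior:
  assumes v: "norm v = 1" and T: "open T" "y \<in> T"
    and into: "\<And>w. w \<in> T \<Longrightarrow> refl_line v c w \<in> \<Omega>"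
  shows "refl_line v c y \<in> interior \<Omega>"
proof (rule interiorI)
  show "open (refl_line v c -` T)"
    using T(1) continuous_on_refl_line by (rule open_vimage)
  show "refl_line v c y \<in> refl_line v c -` T"
    using T(2) by (simp add: refl_line_involutive[OF v])
  show "refl_line v c -` T \<subseteq> \<Omega>"
    using into by (metis refl_line_involutive[OF v] subsetI vimageE)
qed

lemma bounded_closed_under_translation_empty:
  fixes S :: "'a::real_normed_vector set"
  assumes bnd: "bounded S" and "a \<noteq> 0" and shift: "\<And>y. y \<in> S \<Longrightarrow> y + a \<in> S"
  shows "S = {}"
proof (rule ccontr)
  assume "S \<noteq> {}"
  then obtain y where y: "y \<in> S" by blast
  have iterate: "y + real n *\<^sub>R a \<in> S" for n
  proof (induction n)
    case (Suc n)
    then show ?case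
      using shift[OF Suc] by (simp add: algebra_simps)
  qed (use y in simp)
  obtain B where B: "\<And>z. z \<in> S \<Longrightarrow> norm z \<le> B"
    using bnd bounded_iff by blast
  have "0 < norm a"
    using \<open>a \<noteq> 0\<close> by simp
  then obtain n where n: "B + norm y < real n * norm a"
    using reals_Archimedean3 by blast
  have "real n * norm a = norm (real n *\<^sub>R a)"
    by simp
  also have "\<dots> \<le> norm (y + real n *\<^sub>R a) + norm y"
    by (metis add.commute add_diff_cancel_left' norm_triangle_ineq4)
  also have "\<dots> \<le> B + norm y"
    using B[OF iterate[of n]] by simp
  finally show False
    using n by simp
qed

lemma exists_interior_point_refl_line_notin:
  fixes \<Omega> :: "(real^2) set"
  assumes bnd: "bounded \<Omega>" and int: "interior \<Omega> \<noteq> {}" and v: "norm v = 1" and c12: "c1 < c2"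
    and cap: "\<And>z. z \<in> \<Omega> \<Longrightarrow> c1 \<le> z \<bullet> v \<Longrightarrow> refl_line v c1 z \<in> \<Omega>"
  obtains y where "y \<in> interior \<Omega>" "y \<bullet> v < c2" "refl_line v c2 y \<notin> \<Omega>"
proof (rule ccontr)
  assume "\<not> thesis"
  then have into: "\<And>y. y \<in> interior \<Omega> \<Longrightarrow> y \<bullet> v < c2 \<Longrightarrow> refl_line v c2 y \<in> \<Omega>"
    using that by blast
  have above: "refl_line v c1 z \<in> interior \<Omega>" if "z \<in> interior \<Omega>" "c1 < z \<bullet> v" for z
    using that interior_subset[of \<Omega>]
    by (intro refl_line_in_interior[OF v, of "interior \<Omega> \<inter> {w. c1 < w \<bullet> v}"])
       (auto intro: cap open_halfspace_component_gt)
  define S where "S = interior \<Omega> \<inter> {y. y \<bullet> v < c2}"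
  define d where "d = 2 * (c2 - c1)"
  have shift: "y + - (d *\<^sub>R v) \<in> S" if "y \<in> S" for y
  proof -
    have "refl_line v c2 y \<in> interior \<Omega>"
      using that into unfolding S_def
      by (intro refl_line_in_interior[OF v, of "interior \<Omega> \<inter> {w. w \<bullet> v < c2}"])
         (auto intro: open_halfspace_component_lt)
    moreover have "c1 < refl_line v c2 y \<bullet> v"
      using that c12 by (simp add: S_def inner_refl_line[OF v])
    ultimately have "refl_line v c1 (refl_line v c2 y) \<in> interior \<Omega>"
      by (rule above)
    moreover have "refl_line v c1 (refl_line v c2 y) = y + - (d *\<^sub>R v)"
      by (simp add: refl_line_refl_line[OF v] d_def)
    moreover have "(y + - (d *\<^sub>R v)) \<bullet> v < c2"
      using that c12 v by (simp add: S_def d_def inner_diff_left norm_eq_1)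
    ultimately show ?thesis
      by (simp add: S_def)
  qed
  have "S \<subseteq> \<Omega>"
    using interior_subset by (auto simp: S_def)
  moreover have "- (d *\<^sub>R v) \<noteq> 0"
    using c12 v by (auto simp: d_def)
  ultimately have "S = {}"
    using bounded_closed_under_translation_empty[OF bounded_subset[OF bnd] _ shift] by blast
  moreover obtain p where p: "p \<in> interior \<Omega>"
    using int by blast
  ultimately show False
    using above[OF p] c12 by (cases "p \<bullet> v < c2") (auto simp: S_def inner_refl_line[OF v])
qed

lemma solid_angle_center_le_uf_upper:
  fixes \<Omega> :: "(real^2) set"
  assumes cpt: "compact \<Omega>" and int: "interior \<Omega> \<noteq> {}" and h: "h > 0" and v: "norm v = 1"
    and center: "solid_angle_center \<Omega> h x"
  shows "x \<bullet> v \<le> uf_upper \<Omega> v"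
proof (rule ccontr)
  assume beyond: "\<not> x \<bullet> v \<le> uf_upper \<Omega> v"
  define u where "u = uf_upper \<Omega> v"
  define c1 c2 where "c1 = u + (x \<bullet> v - u) / 3" and "c2 = u + 2 * (x \<bullet> v - u) / 3"
  have c: "u < c1" "c1 < c2" "c2 < x \<bullet> v"
    using beyond by (simp_all add: c1_def c2_def u_def field_simps)
  have ne: "\<Omega> \<noteq> {}"
    using int interior_subset by blast
  obtain y where y: "y \<in> interior \<Omega>" "y \<bullet> v < c2" "refl_line v c2 y \<notin> \<Omega>"
    using exists_interior_point_refl_line_notin[OF compact_imp_bounded[OF cpt] int v c(2)]
      refl_line_mem_if_uf_upper_less[OF cpt ne v] c u_def by metis
  have "solid_angle \<Omega> h x < solid_angle \<Omega> h (refl_line v c2 x)"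
    using refl_line_mem_if_uf_upper_less[OF cpt ne v] c u_def
    by (intro solid_angle_less_solid_angle_refl_line[OF cpt h v _ _ y]) auto
  then show False
    using center unfolding solid_angle_center_def by (meson not_le)
qed

lemma uf_lower_eq_uminus_uf_upper: "uf_lower \<Omega> v = - uf_upper \<Omega> (- v)"
proof -
  define Q where "Q c \<longleftrightarrow> refl_line v c ` cap_minus \<Omega> v c \<subseteq> \<Omega>" for c
  have "refl_line (- v) c ` cap_plus \<Omega> (- v) c \<subseteq> \<Omega> \<longleftrightarrow> Q (- c)" for c
  proof -
    have "refl_line (- v) c = refl_line v (- c)"
      by (simp add: fun_eq_iff refl_line_def algebra_simps)
    moreover have "cap_plus \<Omega> (- v) c = cap_minus \<Omega> v (- c)"
      by (auto simp: cap_plus_def cap_minus_def)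
    ultimately show ?thesis
      by (simp add: Q_def)
  qed
  then have upper: "uf_upper \<Omega> (- v) = Inf {b. \<forall>c\<ge>b. Q (- c)}"
    by (simp add: uf_upper_def)
  have "{b. \<forall>c\<le>b. Q c} = uminus ` {b. \<forall>c\<ge>b. Q (- c)}"
  proof (rule set_eqI)
    fix x :: real
    have "(\<forall>c\<le>x. Q c) \<longleftrightarrow> (\<forall>c\<ge>- x. Q (- c))"
      by (metis minus_minus neg_le_iff_le)
    then show "x \<in> {b. \<forall>c\<le>b. Q c} \<longleftrightarrow> x \<in> uminus ` {b. \<forall>c\<ge>b. Q (- c)}"
      by (simp add: image_iff) (metis minus_minus)
  qed
  then show ?thesis
    unfolding uf_lower_def upper Inf_real_def Q_def[symmetric] by simp
qed

lemma solid_angle_center_in_unfolded_region: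
  fixes \<Omega> :: "(real^2) set"
  assumes "compact \<Omega>" "interior \<Omega> \<noteq> {}" "h > 0" "solid_angle_center \<Omega> h x"
  shows "x \<in> unfolded_region \<Omega>"
proof -
  have "uf_lower \<Omega> v \<le> x \<bullet> v \<and> x \<bullet> v \<le> uf_upper \<Omega> v" if "norm v = 1" for v
    using solid_angle_center_le_uf_upper[OF assms(1-3) that assms(4)]
      solid_angle_center_le_uf_upper[OF assms(1-3) _ assms(4), of "- v"] that
    by (simp add: uf_lower_eq_uminus_uf_upper)
  then show ?thesis
    by (simp add: unfolded_region_def)
qed

lemma convex_unfolded_region: "convex (unfolded_region \<Omega>)"
proof -
  have "convex {z. uf_lower \<Omega> v \<le> z \<bullet> v \<and> z \<bullet> v \<le> uf_upper \<Omega> v}" for v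
    using convex_Int[OF convex_halfspace_ge[of "uf_lower \<Omega> v" v] convex_halfspace_le[of v "uf_upper \<Omega> v"]]
    by (simp add: inner_commute Collect_conj_eq)
  then show ?thesis
    unfolding unfolded_region_def by (simp add: convex_INT)
qed

lemma bounded_unfolded_region: "bounded (unfolded_region \<Omega>)"
proof (rule bounded_subset[OF bounded_cbox])
  show "unfolded_region \<Omega> \<subseteq> cbox (\<Sum>i\<in>Basis. uf_lower \<Omega> i *\<^sub>R i) (\<Sum>i\<in>Basis. uf_upper \<Omega> i *\<^sub>R i)"
    by (auto simp: unfolded_region_def mem_box)
qed

lemma interior_exists_farther:
  fixes x y :: "'a::euclidean_space"
  assumes "y \<in> interior S"
  obtains y' where "y' \<in> S" "dist x y < dist x y'"
proof -
  obtain e where e: "0 < e" "ball y e \<subseteq> S"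
    using assms mem_interior by blast
  obtain u :: 'a where u: "norm u = 1"
    using vector_choose_size[of 1] by auto
  obtain w :: 'a where w: "norm w = 1" "0 \<le> (y - x) \<bullet> w"
  proof (cases "0 \<le> (y - x) \<bullet> u")
    case True
    then show ?thesis using that u by blast
  next
    case False
    then show ?thesis using that[of "- u"] u by simp
  qed
  define y' where "y' = y + (e/2) *\<^sub>R w"
  have "y' \<in> ball y e"
    using e w by (simp add: y'_def dist_norm)
  then have "y' \<in> S"
    using e(2) by blast
  have "norm (y' - x) ^ 2 = norm ((y - x) + (e/2) *\<^sub>R w) ^ 2"
    by (simp add: y'_def algebra_simps)
  also have "\<dots> = norm (y - x) ^ 2 + e * ((y - x) \<bullet> w) + (e/2)^2"
    using dot_norm[of "y - x" "(e/2) *\<^sub>R w"] w(1) e(1) by (simp add: field_simps)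
  finally have "norm (y' - x) ^ 2 = norm (y - x) ^ 2 + e * ((y - x) \<bullet> w) + (e/2)^2" .
  moreover have "0 \<le> e * ((y - x) \<bullet> w)" "0 < (e/2)^2"
    using e w by simp_all
  ultimately have "norm (y - x) ^ 2 < norm (y' - x) ^ 2"
    by linarith
  then have "norm (y - x) < norm (y' - x)"
    by (rule power2_less_imp_less) simp
  then show ?thesis
    using that[OF \<open>y' \<in> S\<close>] by (metis dist_commute dist_norm)
qed

lemma compact_farthest_point_in_frontier:
  fixes S :: "'a::euclidean_space set"
  assumes "compact S" "S \<noteq> {}"
  obtains y0 where "y0 \<in> frontier S" "\<And>y. y \<in> S \<Longrightarrow> dist x y \<le> dist x y0"
proof -
  obtain y0 where y0: "y0 \<in> S" "\<And>y. y \<in> S \<Longrightarrow> dist x y \<le> dist x y0"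
    using continuous_attains_sup[OF assms continuous_on_dist[OF continuous_on_const continuous_on_id]]
    by blast
  have "y0 \<notin> interior S"
    using y0 interior_exists_farther[of y0 S x] by (metis not_le)
  then have "y0 \<in> frontier S"
    using y0(1) compact_imp_closed[OF assms(1)] by (simp add: frontier_def)
  then show ?thesis
    using that y0(2) by blast
qed

lemma dist_le_half_of_mem_unfolded_region:
  fixes \<Omega> :: "(real^2) set"
  assumes cpt: "compact \<Omega>" and ne: "\<Omega> \<noteq> {}"
    and hyp: "h \<ge> 2 * Sup {dist z w | z w. z \<in> unfolded_region \<Omega> \<and> w \<in> frontier \<Omega>}"
    and x: "x \<in> unfolded_region \<Omega>"
  shows "\<And>y. y \<in> \<Omega> \<Longrightarrow> dist x y \<le> h/2"
    and "\<And>y. y \<in> interior \<Omega> \<Longrightarrow> dist x y < h/2"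
proof -
  let ?D = "{dist z w | z w. z \<in> unfolded_region \<Omega> \<and> w \<in> frontier \<Omega>}"
  obtain y0 where y0: "y0 \<in> frontier \<Omega>" "\<And>y. y \<in> \<Omega> \<Longrightarrow> dist x y \<le> dist x y0"
    using compact_farthest_point_in_frontier[OF cpt ne, of x] by blast
  obtain M where M: "\<And>z. z \<in> unfolded_region \<Omega> \<Longrightarrow> norm z \<le> M"
    using bounded_unfolded_region bounded_iff by blast
  obtain B where B: "\<And>w. w \<in> frontier \<Omega> \<Longrightarrow> norm w \<le> B"
    using compact_frontier[OF cpt] compact_imp_bounded bounded_iff by metis
  have "bdd_above ?D"
  proof (rule bdd_aboveI)
    fix d assume "d \<in> ?D"
    then obtain z w where "d = dist z w" "z \<in> unfolded_region \<Omega>" "w \<in> frontier \<Omega>"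
      by blast
    then show "d \<le> M + B"
      using M B norm_triangle_ineq4[of z w] by (fastforce simp: dist_norm)
  qed
  then have "dist x y0 \<le> Sup ?D"
    using x y0(1) by (intro cSup_upper) auto
  then have far: "dist x y0 \<le> h/2"
    using hyp by linarith
  show "dist x y \<le> h/2" if "y \<in> \<Omega>" for y
    using y0(2)[OF that] far by linarith
  show "dist x y < h/2" if "y \<in> interior \<Omega>" for y
    using interior_exists_farther[OF that, of x] y0(2) far by (metis less_le_trans)
qed

lemma solid_angle_midpoint_strictly_concave:
  fixes \<Omega> :: "(real^2) set"
  assumes cpt: "compact \<Omega>" and int: "interior \<Omega> \<noteq> {}" and h: "h > 0" and "x0 \<noteq> x1"
    and near: "\<And>p y. p \<in> closed_segment x0 x1 \<Longrightarrow> y \<in> \<Omega> \<Longrightarrow> dist p y \<le> h/2"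
    and near_interior: "\<And>p y. p \<in> closed_segment x0 x1 \<Longrightarrow> y \<in> interior \<Omega> \<Longrightarrow> dist p y < h/2"
  shows "solid_angle \<Omega> h x0 + solid_angle \<Omega> h x1 < 2 * solid_angle \<Omega> h (midpoint x0 x1)"
proof -
  let ?K = "solid_angle_kernel h"
  define D where "D = x1 - x0"
  have D: "D \<noteq> 0"
    using \<open>x0 \<noteq> x1\<close> by (simp add: D_def)
  have on_segment: "norm ((y - x0) - t *\<^sub>R D) = dist (x0 + t *\<^sub>R D) y"
    "x0 + t *\<^sub>R D \<in> closed_segment x0 x1" if "0 \<le> t" "t \<le> 1" for y t
  proof -
    show "norm ((y - x0) - t *\<^sub>R D) = dist (x0 + t *\<^sub>R D) y"
      by (simp only: diff_diff_eq dist_norm norm_minus_commute)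
    show "x0 + t *\<^sub>R D \<in> closed_segment x0 x1"
      using that by (auto simp: in_segment D_def algebra_simps intro!: exI[of _ t])
  qed
  define G where "G y = 2 * ?K (y - midpoint x0 x1) - ?K (y - x0) - ?K (y - x1)" for y
  have G_eq: "G y = 2 * ?K ((y - x0) - (1/2) *\<^sub>R D) - ?K (y - x0) - ?K ((y - x0) - D)" for y
  proof -
    have "y - midpoint x0 x1 = (y - x0) - (1/2) *\<^sub>R D" "y - x1 = (y - x0) - D"
      by (simp_all add: D_def midpoint_def vec_eq_iff field_simps)
    then show ?thesis
      by (simp only: G_def)
  qed
  have int_K: "(\<lambda>y. ?K (y - a)) integrable_on \<Omega>" for a
    using absolutely_integrable_solid_angle_kernel[OF cpt h] set_lebesgue_integral_eq_integral(1)
    by blast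
  have "0 < integral \<Omega> G"
  proof (rule integral_pos_if_pos_on_open[of _ _ "interior \<Omega>"])
    show "G integrable_on \<Omega>"
      unfolding G_def by (intro integrable_diff integrable_on_mult_right int_K)
    show "0 \<le> G y" if "y \<in> \<Omega>" for y
    proof -
      have "?K (y - x0) + ?K ((y - x0) - D) \<le> 2 * ?K ((y - x0) - (1/2) *\<^sub>R D)"
        using that near on_segment by (intro solid_angle_kernel_midpoint_concave[OF h]) simp
      then show ?thesis
        unfolding G_eq by simp
    qed
    show "0 < G y" if "y \<in> interior \<Omega>" for y
    proof -
      have "?K (y - x0) + ?K ((y - x0) - D) < 2 * ?K ((y - x0) - (1/2) *\<^sub>R D)"
        using that near_interior on_segment
        by (intro solid_angle_kernel_midpoint_strictly_concave[OF h D]) simp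
      then show ?thesis
        unfolding G_eq by simp
    qed
    show "continuous_on (interior \<Omega>) G"
      unfolding G_def using h by (intro continuous_intros)
  qed (use int interior_subset in auto)
  also have "integral \<Omega> G
      = 2 * solid_angle \<Omega> h (midpoint x0 x1) - solid_angle \<Omega> h x0 - solid_angle \<Omega> h x1"
    unfolding G_def solid_angle_eq_integral_kernel
    using int_K[of "midpoint x0 x1"] int_K[of x0] int_K[of x1]
    by (simp add: integral_diff integrable_diff integrable_on_mult_right)
  finally show ?thesis
    by simp
qed

theorem theorem4p5:
  fixes \<Omega> :: "(real^2) set" and h :: real
  assumes "compact \<Omega>" and "interior \<Omega> \<noteq> {}"
    and "h > 0"
    and "h \<ge> 2 * Sup {dist z w | z w. z \<in> unfolded_region \<Omega> \<and> w \<in> frontier \<Omega>}"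
  shows "\<exists>!x. solid_angle_center \<Omega> h x"
proof -
  note cpt = assms(1) and int = assms(2) and h = assms(3) and hyp = assms(4)
  have ne: "\<Omega> \<noteq> {}"
    using int interior_subset by blast
  obtain x0 where x0: "solid_angle_center \<Omega> h x0"
    using exists_solid_angle_center[OF cpt int h] .
  have "x1 = x0" if x1: "solid_angle_center \<Omega> h x1" for x1
  proof (rule ccontr)
    assume "x1 \<noteq> x0"
    have "closed_segment x0 x1 \<subseteq> unfolded_region \<Omega>"
      using solid_angle_center_in_unfolded_region[OF cpt int h] x0 x1 convex_unfolded_region
      by (intro closed_segment_subset)
    then have "solid_angle \<Omega> h x0 + solid_angle \<Omega> h x1 < 2 * solid_angle \<Omega> h (midpoint x0 x1)"
      using dist_le_half_of_mem_unfolded_region[OF cpt ne hyp] \<open>x1 \<noteq> x0\<close>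
      by (intro solid_angle_midpoint_strictly_concave[OF cpt int h]) auto
    moreover have "solid_angle \<Omega> h (midpoint x0 x1) \<le> solid_angle \<Omega> h x0"
      "solid_angle \<Omega> h (midpoint x0 x1) \<le> solid_angle \<Omega> h x1"
      using x0 x1 unfolding solid_angle_center_def by blast+
    ultimately show False
      by linarith
  qed
  with x0 show ?thesis
    by blast
qed

end
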